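(* Let $\mathrm P$ be a polymatroid on $E$ of type $\mathbf a$. Then the support of the augmented Bergman fan $\Sigma_{\mathrm P}$ (a subfan of $\Sigma_{\mathbf a}$) equals the support of the augmented Bergman fan $\Sigma_{\mathrm M_\pi(\mathrm P)}$ of the multisymmetric lift (a subfan of the stellahedral fan $\Sigma_{\widetilde E}$); more precisely, $\Sigma_{\mathrm P}$ is the coarsening of $\Sigma_{\mathrm M_\pi(\mathrm P)}$ which is a subfan of $\Sigma_{\mathbf a}$.
   Context: $E=\{1,\dots,m\}$, $\mathbf a\in\mathbb Z_{\ge0}^m$, $n=\sum a_i$. Polymatroid $\mathrm P$ of type $\mathbf a$: submodular monotone $\operatorname{rk}_{\mathrm P}:2^E\to\mathbb Z_{\ge0}$ with $\operatorname{rk}_{\mathrm P}(\emptyset)=0$, $\operatorname{rk}_{\mathrm P}(\{i\})\le a_i$. Flats: $F$ with $\operatorname{rk}(F\cup e)>\operatorname{rk}(F)$ for $e\notin F$. $\widetilde E$ is an $n$-element set, $\pi:\widetilde E\to E$ with $|\pi^{-1}(i)|=a_i$; $\mathbf e_U=\sum_{j\in U}\mathbf e_j\in\mathbb R^{\widetilde E}$. For any map $\pi:\widetilde E\to E$, a compatible pair $I\le\mathcal F$ is $I\subseteq\widetilde E$ and a chain $\mathcal F=\{F_1\subsetneq\dots\subsetneq F_{k+1}=E\}$ ($k\ge0$) with $\pi^{-1}(A)\subseteq I\Rightarrow A\subseteq F_1$; the fan $\Sigma_\pi$ has cones $\sigma_{I\le\mathcal F}=\operatorname{cone}(-\mathbf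 e_{\widetilde E\setminus\pi^{-1}(F_1)},\dots,-\mathbf e_{\widetilde E\setminus\pi^{-1}(F_k)},\mathbf e_j:j\in I)$. $\Sigma_{\mathbf a}=\Sigma_\pi$; the stellahedral fan $\Sigma_{\widetilde E}$ is $\Sigma_{\mathrm{id}}$ for $\mathrm{id}:\widetilde E\to\widetilde E$. The augmented Bergman fan $\Sigma_{\mathrm P}$ is the subfan of $\Sigma_{\mathbf a}$ of cones $\sigma_{S\le\mathcal F}$ with $S\subseteq\widetilde E$, $F_1,\dots,F_k$ proper flats of $\mathrm P$, such that (1) $\operatorname{rk}_{\mathrm P}(\pi(T))\ge|T|$ for all $T\subseteq S$ and (2) $\operatorname{rk}_{\mathrm P}(F\cup\pi(T))>\operatorname{rk}_{\mathrm P}(F)+|T|$ for all $F\in\mathcal F$ and nonempty $T\subseteq S\setminus\pi^{-1}(F)$. The multisymmetric lift $\mathrm M_\pi(\mathrm P)$ is the matroid on $\widetilde E$ with rank function $\operatorname{rk}(U)=\min_{A\subseteq E}\{\operatorname{rk}_{\mathrm P}(A)+|U\setminus\pi^{-1}(A)|\}$. For a matroid $\mathrm M$ on $\widetilde E$, its augmented Bergman fan $\Sigma_{\mathrm M}$ is the subfan of $\Sigma_{\widetilde E}$ of cones $\sigma_{I\le\mathcal F}$ with $I$ independent in $\mathrm M$, $\mathcal F$ a chain of proper flats of $\mathrm M$ (plus the ground set) and $I\subseteq F_1$. *)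

theory Defs
  imports Complex_Main
begin

text \<open>Ground set E :: 'a set (finite), lifted ground set Et :: 'b set (finite),
  map p : Et -> E. The type a is a_i = card of the fibre of p over i.
  Vectors in R^Et are functions 'b => real (vanishing outside Et for our generators).\<close>

definition fibre_card :: "'b set \<Rightarrow> ('b \<Rightarrow> 'a) \<Rightarrow> 'a \<Rightarrow> nat" where
  "fibre_card Et p i = card {j \<in> Et. p j = i}"

definition polymatroid :: "'a set \<Rightarrow> 'b set \<Rightarrow> ('b \<Rightarrow> 'a) \<Rightarrow> ('a set \<Rightarrow> nat) \<Rightarrow> bool" where
  "polymatroid E Et p rk \<longleftrightarrow>
     rk {} = 0 \<and>
     (\<forall>A B. A \<subseteq> B \<and> B \<subseteq> E \<longrightarrow> rk A \<le> rk B) \<and>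
     (\<forall>A B. A \<subseteq> E \<and> B \<subseteq> E \<longrightarrow> rk (A \<union> B) + rk (A \<inter> B) \<le> rk A + rk B) \<and>
     (\<forall>i \<in> E. rk {i} \<le> fibre_card Et p i)"

definition is_flat :: "'a set \<Rightarrow> ('a set \<Rightarrow> nat) \<Rightarrow> 'a set \<Rightarrow> bool" where
  "is_flat E rk F \<longleftrightarrow> F \<subseteq> E \<and> (\<forall>e \<in> E - F. rk (insert e F) > rk F)"

definition vec_ind :: "'b set \<Rightarrow> 'b \<Rightarrow> real" where
  "vec_ind U = (\<lambda>j. if j \<in> U then 1 else 0)"

definition cone_gen :: "('b \<Rightarrow> real) set \<Rightarrow> ('b \<Rightarrow> real) set" where
  "cone_gen G = {x. \<exists>c. (\<forall>g \<in> G. c g \<ge> 0) \<and> x = (\<lambda>j. \<Sum>g\<in>G. c g * g j)}"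

text \<open>A chain F_1 < ... < F_k < F_(k+1) = E is represented by the list Fs = [F_1,...,F_k];
  F_1 is hd (Fs @ [E]).\<close>
definition is_chain :: "'a set \<Rightarrow> 'a set list \<Rightarrow> bool" where
  "is_chain E Fs \<longleftrightarrow> sorted_wrt (\<subset>) (Fs @ [E])"

definition first_flat :: "'a set \<Rightarrow> 'a set list \<Rightarrow> 'a set" where
  "first_flat E Fs = hd (Fs @ [E])"

definition compatible :: "'a set \<Rightarrow> 'b set \<Rightarrow> ('b \<Rightarrow> 'a) \<Rightarrow> 'b set \<Rightarrow> 'a set list \<Rightarrow> bool" where
  "compatible E Et p I Fs \<longleftrightarrow> I \<subseteq> Et \<and> is_chain E Fs \<and>
     (\<forall>A. A \<subseteq> E \<and> {j \<in> Et. p j \<in> A} \<subseteq> I \<longrightarrow> A \<subseteq> first_flat E Fs)"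

definition sigma_cone :: "'b set \<Rightarrow> ('b \<Rightarrow> 'a) \<Rightarrow> 'b set \<Rightarrow> 'a set list \<Rightarrow> ('b \<Rightarrow> real) set" where
  "sigma_cone Et p I Fs =
     cone_gen ((\<lambda>F. (\<lambda>j. - vec_ind (Et - {j \<in> Et. p j \<in> F}) j)) ` set Fs
               \<union> (\<lambda>j. vec_ind {j}) ` I)"

definition fan_pi :: "'a set \<Rightarrow> 'b set \<Rightarrow> ('b \<Rightarrow> 'a) \<Rightarrow> ('b \<Rightarrow> real) set set" where
  "fan_pi E Et p = {sigma_cone Et p I Fs | I Fs. compatible E Et p I Fs}"

definition aug_bergman_poly ::
  "'a set \<Rightarrow> 'b set \<Rightarrow> ('b \<Rightarrow> 'a) \<Rightarrow> ('a set \<Rightarrow> nat) \<Rightarrow> ('b \<Rightarrow> real) set set" where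
  "aug_bergman_poly E Et p rk =
     {sigma_cone Et p S Fs | S Fs.
        compatible E Et p S Fs \<and>
        (\<forall>F \<in> set Fs. is_flat E rk F \<and> F \<noteq> E) \<and>
        (\<forall>T. T \<subseteq> S \<longrightarrow> rk (p ` T) \<ge> card T) \<and>
        (\<forall>F \<in> set (Fs @ [E]). \<forall>T. T \<subseteq> S - {j. p j \<in> F} \<and> T \<noteq> {} \<longrightarrow>
            rk (F \<union> p ` T) > rk F + card T)}"

definition lift_rank :: "'a set \<Rightarrow> ('b \<Rightarrow> 'a) \<Rightarrow> ('a set \<Rightarrow> nat) \<Rightarrow> 'b set \<Rightarrow> nat" where
  "lift_rank E p rk U = Min {rk A + card (U - {j. p j \<in> A}) | A. A \<subseteq> E}"

definition mat_indep :: "'b set \<Rightarrow> ('b set \<Rightarrow> nat) \<Rightarrow> 'b set \<Rightarrow> bool" where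
  "mat_indep Et r I \<longleftrightarrow> I \<subseteq> Et \<and> r I = card I"

definition aug_bergman_mat :: "'b set \<Rightarrow> ('b set \<Rightarrow> nat) \<Rightarrow> ('b \<Rightarrow> real) set set" where
  "aug_bergman_mat Et r =
     {sigma_cone Et id I Fs | I Fs.
        compatible Et Et id I Fs \<and>
        (\<forall>F \<in> set Fs. is_flat Et r F \<and> F \<noteq> Et) \<and>
        mat_indep Et r I \<and> I \<subseteq> first_flat Et Fs}"

definition support :: "('b \<Rightarrow> real) set set \<Rightarrow> ('b \<Rightarrow> real) set" where
  "support S = \<Union> S"

end

theory Submission
  imports Defs
begin

text \<open>
  A cone of the augmented Bergman fan of the lift is spanned by unit vectors of an independent
  set \<open>I\<close> and by the vectors \<open>-e\<^bsub>Et - G\<^esub>\<close> of a chain of proper flats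
  \<open>G\<^sub>1 \<subset> \<dots> \<subset> G\<^sub>k\<close>. Every flat \<open>G\<close> of the lift splits as the preimage of the set
  \<open>F\<close> of elements whose whole fibre lies in \<open>G\<close>, which is a proper flat of the polymatroid,
  and a remainder \<open>J\<close> that is strictly independent over \<open>F\<close>. Hence \<open>-e\<^bsub>Et - G\<^esub>\<close>
  is \<open>-e\<^bsub>Et - \<pi>\<^sup>-\<^sup>1(F)\<^esub>\<close> plus unit vectors of \<open>J\<close>, and the cone lies in the
  cone of the polymatroid fan indexed by \<open>I \<union> J\<^sub>1 \<union> \<dots> \<union> J\<^sub>k\<close> and the chain of the
  \<open>F\<^sub>i\<close>; its defining inequalities follow by chaining strict independence along the flats
  with submodularity.

  Conversely, a point \<open>x\<close> of a cone \<open>\<sigma>\<^bsub>S\<le>\<F>\<^esub>\<close> of the polymatroid fan is a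
  nonnegative vector supported on \<open>S\<close> minus the weighted depth of \<open>\<pi>(j)\<close> in the chain
  \<open>\<F>\<close>. Each superlevel set \<open>{x \<ge> t}\<close>, \<open>t \<le> 0\<close>, is therefore the preimage of a member of
  \<open>\<F>\<close> together with points of \<open>S\<close>, hence a flat of the lift whose vector lies in
  \<open>\<sigma>\<^bsub>S\<le>\<F>\<^esub>\<close>. Since \<open>x\<close> lies in the cone spanned by its nonpositive superlevel sets
  and its positive coordinates, which is a cone of the lift's fan, every cone of the polymatroid
  fan is a union of cones of the lift's fan.
\<close>

section \<open>Cones spanned by finitely many vectors\<close>

lemma cone_gen_add:
  assumes "x \<in> cone_gen G" "y \<in> cone_gen G"
  shows "(\<lambda>j. x j + y j) \<in> cone_gen G"
proof -
  obtain c where c: "\<forall>g\<in>G. 0 \<le> c g" "x = (\<lambda>j. \<Sum>g\<in>G. c g * g j)"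
    using assms(1) unfolding cone_gen_def by blast
  obtain d where d: "\<forall>g\<in>G. 0 \<le> d g" "y = (\<lambda>j. \<Sum>g\<in>G. d g * g j)"
    using assms(2) unfolding cone_gen_def by blast
  show ?thesis
    unfolding cone_gen_def
    by (intro CollectI exI[of _ "\<lambda>g. c g + d g"]) (simp add: c d sum.distrib distrib_right)
qed

lemma cone_gen_scale:
  assumes "x \<in> cone_gen G" "(a::real) \<ge> 0"
  shows "(\<lambda>j. a * x j) \<in> cone_gen G"
proof -
  obtain c where c: "\<forall>g\<in>G. 0 \<le> c g" "x = (\<lambda>j. \<Sum>g\<in>G. c g * g j)"
    using assms(1) unfolding cone_gen_def by blast
  show ?thesis
    unfolding cone_gen_def
    by (intro CollectI exI[of _ "\<lambda>g. a * c g"]) (simp add: c assms(2) sum_distrib_left mult.assoc)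
qed

lemma cone_gen_sum:
  assumes "finite A" "\<forall>a\<in>A. f a \<in> cone_gen G"
  shows "(\<lambda>j. \<Sum>a\<in>A. f a j) \<in> cone_gen G"
  using assms
proof (induction A rule: finite_induct)
  case empty
  show ?case
    unfolding cone_gen_def by (auto intro!: exI[of _ "\<lambda>_. 0"])
next
  case (insert a A)
  then show ?case
    using cone_gen_add[of "f a" G "\<lambda>j. \<Sum>a\<in>A. f a j"] by simp
qed

lemma cone_gen_generator:
  assumes "finite G" "g \<in> G"
  shows "g \<in> cone_gen G"
proof -
  have "(\<Sum>h\<in>G. (if h = g then 1 else 0) * h j) = (\<Sum>h\<in>G. if h = g then g j else 0)" for j
    by (rule sum.cong) auto
  then have "g j = (\<Sum>h\<in>G. (if h = g then 1 else 0) * h j)" for j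
    using assms by simp
  then show ?thesis
    unfolding cone_gen_def by (intro CollectI exI[of _ "\<lambda>h. if h = g then 1 else 0"]) auto
qed

lemma cone_gen_subset:
  assumes "finite G" "G \<subseteq> cone_gen H"
  shows "cone_gen G \<subseteq> cone_gen H"
proof
  fix x assume "x \<in> cone_gen G"
  then obtain c where c: "\<forall>g\<in>G. 0 \<le> c g" "x = (\<lambda>j. \<Sum>g\<in>G. c g * g j)"
    unfolding cone_gen_def by blast
  have "\<forall>g\<in>G. (\<lambda>j. c g * g j) \<in> cone_gen H"
    using assms(2) c(1) cone_gen_scale by blast
  then show "x \<in> cone_gen H"
    using cone_gen_sum[OF assms(1), of "\<lambda>g j. c g * g j"] c(2) by simp
qed

lemma cone_gen_mono:
  assumes "finite H" "G \<subseteq> H"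
  shows "cone_gen G \<subseteq> cone_gen H"
  using assms cone_gen_subset[of G H] cone_gen_generator[of H] finite_subset by blast

lemma vec_ind_in_cone_gen:
  assumes "finite J" "\<forall>j\<in>J. vec_ind {j} \<in> cone_gen G"
  shows "vec_ind J \<in> cone_gen G"
proof -
  have "vec_ind J = (\<lambda>i. \<Sum>j\<in>J. vec_ind {j} i)"
    using assms(1) by (auto simp: vec_ind_def)
  then show ?thesis
    using cone_gen_sum[OF assms(1), of "\<lambda>j. vec_ind {j}"] assms(2) by simp
qed

text \<open>Coefficients of a generator hit by several indices are shared equally among them.\<close>
lemma cone_gen_image_coeffs:
  assumes "finite A" "x \<in> cone_gen (f ` A)"
  shows "\<exists>c. (\<forall>a. 0 \<le> c a) \<and> x = (\<lambda>j. \<Sum>a\<in>A. c a * f a j)"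
proof -
  obtain c where c: "\<forall>g\<in>f ` A. 0 \<le> c g" "x = (\<lambda>j. \<Sum>g\<in>f ` A. c g * g j)"
    using assms(2) unfolding cone_gen_def by blast
  define n where "n a = card {a' \<in> A. f a' = f a}" for a
  define d where "d a = (if a \<in> A then c (f a) / n a else 0)" for a
  have n_pos: "n a > 0" if "a \<in> A" for a
    unfolding n_def using assms(1) that by (auto simp: card_gt_0_iff)
  have "(\<Sum>a\<in>{a \<in> A. f a = g}. d a * f a j) = c g * g j" if "g \<in> f ` A" for g j
  proof -
    obtain a0 where a0: "a0 \<in> A" "g = f a0" using \<open>g \<in> f ` A\<close> by blast
    have "(\<Sum>a\<in>{a \<in> A. f a = g}. d a * f a j) = (\<Sum>a\<in>{a \<in> A. f a = g}. c g / n a0 * g j)"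
      by (rule sum.cong) (auto simp: d_def n_def a0(2))
    also have "\<dots> = c g * g j"
      using n_pos[OF a0(1)] by (simp add: n_def a0(2))
    finally show ?thesis .
  qed
  then have "(\<Sum>a\<in>A. d a * f a j) = (\<Sum>g\<in>f ` A. c g * g j)" for j
    by (simp add: sum.image_gen[OF assms(1), of _ f])
  moreover have "0 \<le> d a" for a
    using c(1) n_pos by (simp add: d_def)
  ultimately show ?thesis
    using c(2) by (intro exI[of _ d]) auto
qed

lemma cone_gen_Un_image_coeffs:
  assumes "finite A" "finite B" "x \<in> cone_gen (f ` A \<union> g ` B)"
  shows "\<exists>c d. (\<forall>a. 0 \<le> c a) \<and> (\<forall>b. 0 \<le> d b) \<and>
           x = (\<lambda>j. (\<Sum>a\<in>A. c a * f a j) + (\<Sum>b\<in>B. d b * g b j))"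
proof -
  have "f ` A \<union> g ` B = case_sum f g ` (A <+> B)"
    by (auto simp: Plus_def image_Un image_image)
  then obtain e where e: "\<forall>z. 0 \<le> e z" "x = (\<lambda>j. \<Sum>z\<in>A <+> B. e z * case_sum f g z j)"
    using cone_gen_image_coeffs[of "A <+> B" x "case_sum f g"] assms by auto
  show ?thesis
    using e assms(1,2) by (intro exI[of _ "e \<circ> Inl"] exI[of _ "e \<circ> Inr"]) (simp add: sum.Plus)
qed

lemma sorted_wrt_psubset_chain: "sorted_wrt (\<subset>) xs \<Longrightarrow> chain\<^sub>\<subseteq> (set xs)"
  by (induction xs) (auto simp: chain_subset_def)

lemma sorted_wrt_psubset_hd_subset:
  assumes "sorted_wrt (\<subset>) (xs @ [T])" "A \<in> set (xs @ [T])"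
  shows "hd (xs @ [T]) \<subseteq> A"
  using assms by (cases xs) auto

lemma finite_chain_Union_mem: "finite M \<Longrightarrow> M \<noteq> {} \<Longrightarrow> chain\<^sub>\<subseteq> M \<Longrightarrow> \<Union>M \<in> M"
  by (simp add: Union_in_chain chain_subset_alt_def)

lemma finite_chain_Inter_mem: "finite M \<Longrightarrow> M \<noteq> {} \<Longrightarrow> chain\<^sub>\<subseteq> M \<Longrightarrow> \<Inter>M \<in> M"
  by (simp add: Inter_in_chain chain_subset_alt_def)

lemma finite_chain_sorted_list:
  assumes "finite X" "chain\<^sub>\<subseteq> X" "\<forall>A\<in>X. A \<subset> T"
  shows "\<exists>xs. set xs = X \<and> sorted_wrt (\<subset>) (xs @ [T])"
  using assms
proof (induction X arbitrary: T rule: finite_remove_induct)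
  case empty
  show ?case by (intro exI[of _ "[]"]) simp
next
  case (remove X)
  define M where "M = \<Union>X"
  have M: "M \<in> X" "\<forall>A\<in>X. A \<subseteq> M"
    using finite_chain_Union_mem remove by (auto simp: M_def)
  have "chain\<^sub>\<subseteq> (X - {M})"
    using remove.prems(1) by (auto simp: chain_subset_def)
  moreover have "\<forall>A\<in>X - {M}. A \<subset> M"
    using M by blast
  ultimately obtain xs where xs: "set xs = X - {M}" "sorted_wrt (\<subset>) (xs @ [M])"
    using remove.IH[OF M(1)] by blast
  have "sorted_wrt (\<subset>) ((xs @ [M]) @ [T])"
    using xs M(1) remove.prems(2) by (auto simp: sorted_wrt_append)
  moreover have "set (xs @ [M]) = X"
    using xs M(1) by auto
  ultimately show ?case by blast
qed

definition depth :: "'a set set \<Rightarrow> ('a set \<Rightarrow> real) \<Rightarrow> 'a \<Rightarrow> real" where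
  "depth L c e = (\<Sum>F\<in>L. if e \<in> F then 0 else c F)"

text \<open>For nonnegative weights, every sublevel set of the depth function is a member of the chain:
  it is the union of the members it contains, since the least member containing \<open>e\<close>
  consists of elements no deeper than \<open>e\<close>.\<close>
lemma depth_sublevel_mem_chain:
  assumes "finite L" "chain\<^sub>\<subseteq> L" "X \<in> L" "\<forall>F\<in>L. F \<subseteq> X" "\<forall>F. 0 \<le> c F" "0 \<le> s"
  shows "{e \<in> X. depth L c e \<le> s} \<in> L"
proof -
  let ?Y = "{e \<in> X. depth L c e \<le> s}"
  let ?M = "{F \<in> L. F \<subseteq> ?Y}"
  have "\<Inter>L \<in> ?M"
  proof -
    have "\<Inter>L \<in> L"
      using finite_chain_Inter_mem assms(1-3) by blast
    moreover have "depth L c e = 0" if "e \<in> \<Inter>L" for e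
      using that by (auto simp: depth_def intro!: sum.neutral)
    ultimately show ?thesis
      using assms(3,6) by fastforce
  qed
  have "?Y \<subseteq> \<Union>?M"
  proof
    fix e assume e: "e \<in> ?Y"
    define F' where "F' = \<Inter>{F \<in> L. e \<in> F}"
    have "F' \<in> L"
      using finite_chain_Inter_mem[of "{F \<in> L. e \<in> F}"] assms(1-3) e
      by (auto simp: F'_def chain_subset_def)
    moreover have "depth L c e' \<le> depth L c e" if "e' \<in> F'" for e'
      unfolding depth_def using that assms(5) by (intro sum_mono) (auto simp: F'_def)
    ultimately have "F' \<in> ?M"
      using e assms(4) by fastforce
    moreover have "e \<in> F'"
      by (simp add: F'_def)
    ultimately show "e \<in> \<Union>?M" by blast
  qed
  then have "?Y = \<Union>?M" by blast
  moreover have "\<Union>?M \<in> ?M"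
    using finite_chain_Union_mem[of ?M] \<open>\<Inter>L \<in> ?M\<close> assms(1,2)
    by (auto simp: chain_subset_def)
  ultimately show ?thesis by simp
qed

lemma depth_nonneg: "\<forall>F. 0 \<le> c F \<Longrightarrow> 0 \<le> depth L c e"
  unfolding depth_def by (intro sum_nonneg) auto

lemma depth_insert: "finite L \<Longrightarrow> e \<in> X \<Longrightarrow> depth (insert X L) c e = depth L c e"
  unfolding depth_def by (cases "X \<in> L") (simp_all add: insert_absorb)

section \<open>Superlevel sets and the stellahedral cone of a vector\<close>

definition superlevel :: "'b set \<Rightarrow> ('b \<Rightarrow> real) \<Rightarrow> real \<Rightarrow> 'b set" where
  "superlevel Et x t = {j \<in> Et. t \<le> x j}"

definition superlevel_sets :: "'b set \<Rightarrow> ('b \<Rightarrow> real) \<Rightarrow> 'b set set" where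
  "superlevel_sets Et x = {superlevel Et x t | t. t \<le> 0} - {Et}"

lemma superlevel_antimono: "t \<le> t' \<Longrightarrow> superlevel Et x t' \<subseteq> superlevel Et x t"
  by (auto simp: superlevel_def)

lemma finite_superlevel_sets: "finite Et \<Longrightarrow> finite (superlevel_sets Et x)"
  by (rule finite_subset[of _ "Pow Et"]) (auto simp: superlevel_sets_def superlevel_def)

lemma superlevel_sets_chain: "chain\<^sub>\<subseteq> (superlevel_sets Et x)"
  unfolding chain_subset_def
proof (intro ballI)
  fix A B assume "A \<in> superlevel_sets Et x" "B \<in> superlevel_sets Et x"
  then obtain t t' where "A = superlevel Et x t" "B = superlevel Et x t'"
    unfolding superlevel_sets_def by blast
  then show "A \<subseteq> B \<or> B \<subseteq> A"
    using superlevel_antimono nle_le by metis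
qed

lemma superlevel_sets_psubset: "A \<in> superlevel_sets Et x \<Longrightarrow> A \<subset> Et"
  by (auto simp: superlevel_sets_def superlevel_def)

lemma nonneg_in_cone_gen_units:
  assumes "finite Et" "\<forall>j. j \<notin> Et \<longrightarrow> x j = 0" "\<forall>j. 0 \<le> x j"
  shows "x \<in> cone_gen ((\<lambda>j. vec_ind {j}) ` {j \<in> Et. 0 < x j})"
proof -
  let ?P = "{j \<in> Et. 0 < x j}"
  have "(\<lambda>i. x j * vec_ind {j} i) \<in> cone_gen ((\<lambda>j. vec_ind {j}) ` ?P)" if "j \<in> ?P" for j
  proof (rule cone_gen_scale)
    show "vec_ind {j} \<in> cone_gen ((\<lambda>j. vec_ind {j}) ` ?P)"
      using that assms(1) by (intro cone_gen_generator) auto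
  qed (use that in simp)
  then have "(\<lambda>i. \<Sum>j\<in>?P. x j * vec_ind {j} i) \<in> cone_gen ((\<lambda>j. vec_ind {j}) ` ?P)"
    using assms(1) by (intro cone_gen_sum) auto
  moreover have "(\<Sum>j\<in>?P. x j * vec_ind {j} i) = x i" for i
  proof -
    have "(\<Sum>j\<in>?P. x j * vec_ind {j} i) = (\<Sum>j\<in>?P. if j = i then x i else 0)"
      by (rule sum.cong) (auto simp: vec_ind_def)
    also have "\<dots> = (if i \<in> ?P then x i else 0)"
      using assms(1) by simp
    also have "\<dots> = x i"
      using assms(2,3)[rule_format, of i] by auto
    finally show ?thesis .
  qed
  ultimately show ?thesis
    by simp
qed

lemma superlevel_sets_raise_min:
  assumes "m < m'" "\<forall>j\<in>Et. x j \<noteq> m \<longrightarrow> m' \<le> x j"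
  shows "superlevel_sets Et (\<lambda>j. if j \<in> Et \<and> x j = m then m' else x j) \<subseteq> superlevel_sets Et x"
proof
  let ?y = "\<lambda>j. if j \<in> Et \<and> x j = m then m' else x j"
  fix A assume "A \<in> superlevel_sets Et ?y"
  then obtain t where t: "t \<le> 0" "A = superlevel Et ?y t" "A \<noteq> Et"
    by (auto simp: superlevel_sets_def)
  then obtain j where j: "j \<in> Et" "\<not> t \<le> ?y j"
    unfolding superlevel_def by blast
  then have "m' < t"
    using assms(2) by (cases "x j = m") auto
  then have "t \<le> ?y j \<longleftrightarrow> t \<le> x j" for j
    using assms(1) by auto
  then have "A = superlevel Et x t"
    using t(2) unfolding superlevel_def by blast
  then show "A \<in> superlevel_sets Et x"
    using t by (auto simp: superlevel_sets_def)
qed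

lemma raise_min_plus_generator:
  assumes "m < m'" "\<forall>j\<in>Et. x j \<noteq> m \<longrightarrow> m' \<le> x j" "\<forall>j. j \<notin> Et \<longrightarrow> x j = 0"
  shows "(\<lambda>j. (if j \<in> Et \<and> x j = m then m' else x j) + (m' - m) * - vec_ind (Et - superlevel Et x m') j)
    = x"
proof
  fix j
  show "(if j \<in> Et \<and> x j = m then m' else x j) + (m' - m) * - vec_ind (Et - superlevel Et x m') j = x j"
    using assms by (cases "j \<in> Et"; cases "x j = m") (auto simp: vec_ind_def superlevel_def)
qed

lemma min_and_next_value:
  fixes x :: "'b \<Rightarrow> 'v::{zero,linorder}"
  assumes "finite Et" "j0 \<in> Et" "x j0 < 0"
  obtains m m' where "m \<in> x ` Et" "m < m'" "m' \<le> 0" "m' = 0 \<or> m' \<in> x ` Et"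
    "\<forall>j\<in>Et. x j \<noteq> m \<longrightarrow> m' \<le> x j"
proof -
  define m where "m = Min (x ` Et)"
  have m: "m \<in> x ` Et" "\<forall>j\<in>Et. m \<le> x j"
    using assms(1,2) by (auto simp: m_def intro!: Min_in)
  define M where "M = {t \<in> insert 0 (x ` Et). m < t}"
  have "finite M" "0 \<in> M"
    using assms m(2) by (fastforce simp: M_def)+
  then have m': "Min M \<in> M" "\<forall>t\<in>M. Min M \<le> t"
    by (auto intro!: Min_in)
  show thesis
  proof (rule that[of m "Min M"])
    show "\<forall>j\<in>Et. x j \<noteq> m \<longrightarrow> Min M \<le> x j"
      using m(2) m'(2) by (auto simp: M_def order.order_iff_strict)
  qed (use m(1) m' \<open>0 \<in> M\<close> in \<open>auto simp: M_def\<close>)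
qed

text \<open>Induction on the number of negative values: raising the minimum value \<open>m\<close> to the next
  value \<open>m'\<close> changes \<open>x\<close> by a multiple of the generator of the superlevel set at \<open>m'\<close>.\<close>
lemma mem_cone_gen_superlevel_sets:
  assumes "finite Et" "\<forall>j. j \<notin> Et \<longrightarrow> x j = 0"
  shows "x \<in> cone_gen ((\<lambda>A j. - vec_ind (Et - A) j) ` superlevel_sets Et x
                        \<union> (\<lambda>j. vec_ind {j}) ` {j \<in> Et. 0 < x j})"
  using assms(2)
proof (induction "card {t \<in> x ` Et. t < 0}" arbitrary: x rule: less_induct)
  case less
  let ?gens = "\<lambda>x. (\<lambda>A j. - vec_ind (Et - A) j) ` superlevel_sets Et x
                   \<union> (\<lambda>j. vec_ind {j}) ` {j \<in> Et. 0 < x j}"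
  have fin_gens: "finite (?gens x)" for x
    using assms(1) finite_superlevel_sets by auto
  show ?case
  proof (cases "\<forall>j. 0 \<le> x j")
    case True
    then show ?thesis
      using nonneg_in_cone_gen_units[OF assms(1) less.prems] cone_gen_mono[OF fin_gens] by blast
  next
    case False
    then obtain j0 where "j0 \<in> Et" "x j0 < 0"
      using less.prems by (metis not_le order.refl)
    then obtain m m' where m: "m \<in> x ` Et" "m < m'" "m' \<le> 0" "m' = 0 \<or> m' \<in> x ` Et"
      "\<forall>j\<in>Et. x j \<noteq> m \<longrightarrow> m' \<le> x j"
      using min_and_next_value assms(1) by metis
    define y where "y = (\<lambda>j. if j \<in> Et \<and> x j = m then m' else x j)"
    have "{t \<in> y ` Et. t < 0} \<subseteq> {t \<in> x ` Et. t < 0} - {m}"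
      using m(2,4) by (auto simp: y_def)
    moreover have "m \<in> {t \<in> x ` Et. t < 0}"
      using m(1-3) by auto
    ultimately have "{t \<in> y ` Et. t < 0} \<subset> {t \<in> x ` Et. t < 0}"
      by blast
    then have "card {t \<in> y ` Et. t < 0} < card {t \<in> x ` Et. t < 0}"
      using assms(1) by (intro psubset_card_mono) auto
    then have "y \<in> cone_gen (?gens y)"
      using less.hyps[of y] less.prems by (simp add: y_def)
    moreover have "?gens y \<subseteq> ?gens x"
    proof -
      have "superlevel_sets Et y \<subseteq> superlevel_sets Et x"
        unfolding y_def by (rule superlevel_sets_raise_min[OF m(2,5)])
      moreover have "{j \<in> Et. 0 < y j} = {j \<in> Et. 0 < x j}"
        using m(2,3) by (auto simp: y_def)
      ultimately show ?thesis
        by blast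
    qed
    ultimately have y_in: "y \<in> cone_gen (?gens x)"
      using cone_gen_mono[OF fin_gens] by blast
    have "superlevel Et x m' \<noteq> Et"
      using m(1,2) by (force simp: superlevel_def)
    then have "superlevel Et x m' \<in> superlevel_sets Et x"
      using m(3) by (auto simp: superlevel_sets_def)
    then have "(\<lambda>j. (m' - m) * - vec_ind (Et - superlevel Et x m') j) \<in> cone_gen (?gens x)"
      using m(2) by (intro cone_gen_scale cone_gen_generator fin_gens) auto
    then have "(\<lambda>j. y j + (m' - m) * - vec_ind (Et - superlevel Et x m') j) \<in> cone_gen (?gens x)"
      by (rule cone_gen_add[OF y_in])
    moreover have "(\<lambda>j. y j + (m' - m) * - vec_ind (Et - superlevel Et x m') j) = x"
      unfolding y_def by (rule raise_min_plus_generator[OF m(2,5) less.prems])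
    ultimately show ?thesis
      by simp
  qed
qed

lemma sigma_cone_flat_generator:
  "finite I \<Longrightarrow> F \<in> set Fs \<Longrightarrow> (\<lambda>j. - vec_ind (Et - {j \<in> Et. p j \<in> F}) j) \<in> sigma_cone Et p I Fs"
  unfolding sigma_cone_def by (rule cone_gen_generator) auto

lemma sigma_cone_unit_generator:
  "finite I \<Longrightarrow> j \<in> I \<Longrightarrow> vec_ind {j} \<in> sigma_cone Et p I Fs"
  unfolding sigma_cone_def by (rule cone_gen_generator) auto

lemma sigma_cone_flat_Un_generator:
  assumes "finite S" "F \<in> set Fs" "K \<subseteq> S" "K \<subseteq> Et"
  shows "(\<lambda>j. - vec_ind (Et - ({j \<in> Et. p j \<in> F} \<union> K)) j) \<in> sigma_cone Et p S Fs"
proof -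
  let ?P = "{j \<in> Et. p j \<in> F}"
  have KS: "K - ?P \<subseteq> S"
    using assms(3) by blast
  then have "finite (K - ?P)"
    using assms(1) by (rule finite_subset)
  moreover have "\<forall>j\<in>K - ?P. vec_ind {j} \<in> sigma_cone Et p S Fs"
    using KS by (auto intro: sigma_cone_unit_generator[OF assms(1)])
  ultimately have "vec_ind (K - ?P) \<in> sigma_cone Et p S Fs"
    unfolding sigma_cone_def by (rule vec_ind_in_cone_gen)
  with sigma_cone_flat_generator[OF assms(1,2)]
  have "(\<lambda>j. - vec_ind (Et - ?P) j + vec_ind (K - ?P) j) \<in> sigma_cone Et p S Fs"
    unfolding sigma_cone_def by (rule cone_gen_add)
  moreover have "- vec_ind (Et - ?P) j + vec_ind (K - ?P) j = - vec_ind (Et - (?P \<union> K)) j" for j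
    using assms(4) by (auto simp: vec_ind_def)
  ultimately show ?thesis
    by (simp only:)
qed

lemma sigma_cone_subsetI:
  assumes "finite I"
    and "\<forall>F\<in>set Fs. (\<lambda>j. - vec_ind (Et - {j \<in> Et. p j \<in> F}) j) \<in> sigma_cone Et' p' I' Fs'"
    and "\<forall>j\<in>I. vec_ind {j} \<in> sigma_cone Et' p' I' Fs'"
  shows "sigma_cone Et p I Fs \<subseteq> sigma_cone Et' p' I' Fs'"
  using assms unfolding sigma_cone_def by (intro cone_gen_subset) auto

lemma sigma_cone_in_aug_bergman_mat:
  assumes "sorted_wrt (\<subset>) (Gs @ [Et])" "\<forall>G\<in>set Gs. is_flat Et r G \<and> G \<noteq> Et"
    and "mat_indep Et r I" "I \<subseteq> hd (Gs @ [Et])"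
  shows "sigma_cone Et id I Gs \<in> aug_bergman_mat Et r"
proof -
  have "compatible Et Et id I Gs"
    using assms by (auto simp: compatible_def is_chain_def first_flat_def mat_indep_def)
  then show ?thesis
    using assms unfolding aug_bergman_mat_def first_flat_def by blast
qed

lemma aug_bergman_matE:
  assumes "C \<in> aug_bergman_mat Et r"
  obtains I Gs where "C = sigma_cone Et id I Gs" "sorted_wrt (\<subset>) (Gs @ [Et])"
    "\<forall>G\<in>set Gs. is_flat Et r G \<and> G \<noteq> Et" "mat_indep Et r I" "I \<subseteq> hd (Gs @ [Et])"
proof -
  obtain I Gs where "C = sigma_cone Et id I Gs" "compatible Et Et id I Gs"
    "\<forall>G\<in>set Gs. is_flat Et r G \<and> G \<noteq> Et" "mat_indep Et r I" "I \<subseteq> first_flat Et Gs"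
    using assms unfolding aug_bergman_mat_def by blast
  moreover have "sorted_wrt (\<subset>) (Gs @ [Et])"
    using \<open>compatible Et Et id I Gs\<close> by (simp add: compatible_def is_chain_def)
  ultimately show thesis
    using that[of I Gs] unfolding first_flat_def by blast
qed

lemma sigma_cone_coordinates:
  assumes "finite S" "S \<subseteq> Et" "x \<in> sigma_cone Et p S Fs"
  obtains c P where "\<forall>F. 0 \<le> c F" "\<forall>j. 0 \<le> P j" "\<forall>j. j \<notin> S \<longrightarrow> P j = 0"
    "\<forall>j. x j = P j - (if j \<in> Et then depth (set Fs) c (p j) else 0)"
proof -
  have "x \<in> cone_gen ((\<lambda>F j. - vec_ind (Et - {j \<in> Et. p j \<in> F}) j) ` set Fs \<union> (\<lambda>j. vec_ind {j}) ` S)"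
    using assms(3) by (simp add: sigma_cone_def)
  then obtain c d where cd: "\<forall>F. 0 \<le> c F" "\<forall>b. 0 \<le> d b"
    and x: "x = (\<lambda>j. (\<Sum>F\<in>set Fs. c F * - vec_ind (Et - {j \<in> Et. p j \<in> F}) j)
                    + (\<Sum>b\<in>S. d b * vec_ind {b} j))"
    using cone_gen_Un_image_coeffs[OF finite_set assms(1)] by blast
  define P where "P j = (if j \<in> S then d j else 0)" for j
  have "(\<Sum>b\<in>S. d b * vec_ind {b} j) = P j" for j
  proof -
    have "(\<Sum>b\<in>S. d b * vec_ind {b} j) = (\<Sum>b\<in>S. if b = j then d j else 0)"
      by (rule sum.cong) (auto simp: vec_ind_def)
    then show ?thesis
      using assms(1) by (simp add: P_def)
  qed
  moreover have "(\<Sum>F\<in>set Fs. c F * - vec_ind (Et - {j \<in> Et. p j \<in> F}) j)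
      = - (if j \<in> Et then depth (set Fs) c (p j) else 0)" for j
  proof (cases "j \<in> Et")
    case True
    have "(\<Sum>F\<in>set Fs. c F * - vec_ind (Et - {j \<in> Et. p j \<in> F}) j)
        = (\<Sum>F\<in>set Fs. - (if p j \<in> F then 0 else c F))"
      using True by (intro sum.cong) (auto simp: vec_ind_def)
    then show ?thesis
      using True by (simp add: depth_def sum_negf)
  qed (simp add: vec_ind_def)
  ultimately have "\<forall>j. x j = P j - (if j \<in> Et then depth (set Fs) c (p j) else 0)"
    by (simp add: x)
  moreover have "\<forall>j. 0 \<le> P j" "\<forall>j. j \<notin> S \<longrightarrow> P j = 0"
    using cd(2) by (auto simp: P_def)
  ultimately show thesis
    using that cd(1) by blast
qed

lemma sigma_cone_vanishes:
  "finite S \<Longrightarrow> S \<subseteq> Et \<Longrightarrow> x \<in> sigma_cone Et p S Fs \<Longrightarrow> j \<notin> Et \<Longrightarrow> x j = 0"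
  by (erule sigma_cone_coordinates) (auto simp: subset_iff)

lemma sigma_cone_positive_subset:
  assumes "finite S" "S \<subseteq> Et" "x \<in> sigma_cone Et p S Fs"
  shows "{j \<in> Et. 0 < x j} \<subseteq> S"
proof -
  obtain c P where c: "\<forall>F. 0 \<le> c F" and P: "\<forall>j. j \<notin> S \<longrightarrow> P j = 0"
    and x: "\<forall>j. x j = P j - (if j \<in> Et then depth (set Fs) c (p j) else 0)"
    using sigma_cone_coordinates[OF assms] by metis
  show ?thesis
  proof
    fix j assume "j \<in> {j \<in> Et. 0 < x j}"
    then have "0 < P j"
      using x depth_nonneg[OF c, of "set Fs" "p j"] by auto
    then show "j \<in> S"
      using P by force
  qed
qed

lemma sigma_cone_id_eq:
  assumes "\<forall>A\<in>set Ls. A \<subseteq> Et"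
  shows "sigma_cone Et id I Ls
    = cone_gen ((\<lambda>A j. - vec_ind (Et - A) j) ` set Ls \<union> (\<lambda>j. vec_ind {j}) ` I)"
proof -
  have "{j \<in> Et. id j \<in> A} = A" if "A \<in> set Ls" for A
    using assms that by auto
  then have "(\<lambda>A j. - vec_ind (Et - {j \<in> Et. id j \<in> A}) j) ` set Ls = (\<lambda>A j. - vec_ind (Et - A) j) ` set Ls"
    by (intro image_cong) simp_all
  then show ?thesis
    by (simp add: sigma_cone_def)
qed

lemma superlevel_sets_sorted_list:
  "finite Et \<Longrightarrow> \<exists>Ls. set Ls = superlevel_sets Et x \<and> sorted_wrt (\<subset>) (Ls @ [Et])"
  using superlevel_sets_psubset
  by (intro finite_chain_sorted_list finite_superlevel_sets superlevel_sets_chain) blast+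

lemma positive_subset_hd_superlevel:
  assumes "set Ls = superlevel_sets Et x"
  shows "{j \<in> Et. 0 < x j} \<subseteq> hd (Ls @ [Et])"
proof -
  have "{j \<in> Et. 0 < x j} \<subseteq> A" if "A \<in> set (Ls @ [Et])" for A
  proof -
    have "A = Et \<or> (\<exists>t \<le> 0. A = superlevel Et x t)"
      using that assms unfolding superlevel_sets_def by auto
    then show ?thesis
      unfolding superlevel_def by force
  qed
  then show ?thesis
    by (simp add: hd_append)
qed

lemma mem_sigma_cone_superlevel_sets:
  assumes "finite Et" "\<forall>j. j \<notin> Et \<longrightarrow> x j = 0" "set Ls = superlevel_sets Et x"
  shows "x \<in> sigma_cone Et id {j \<in> Et. 0 < x j} Ls"
proof -
  have "\<forall>A\<in>set Ls. A \<subseteq> Et"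
    using assms(3) superlevel_sets_psubset by blast
  then show ?thesis
    using mem_cone_gen_superlevel_sets[OF assms(1,2)] by (simp add: sigma_cone_id_eq assms(3))
qed

section \<open>The multisymmetric lift of a polymatroid\<close>

locale polymatroid_lift =
  fixes E :: "'a set" and Et :: "'b set" and p :: "'b \<Rightarrow> 'a" and rk :: "'a set \<Rightarrow> nat"
  assumes finite_E: "finite E" and finite_Et: "finite Et" and p_Et: "p ` Et \<subseteq> E"
    and polymatroid: "polymatroid E Et p rk"
begin

abbreviation pre :: "'a set \<Rightarrow> 'b set" where
  "pre A \<equiv> {j \<in> Et. p j \<in> A}"

abbreviation lift_rk :: "'b set \<Rightarrow> nat" where
  "lift_rk \<equiv> lift_rank E p rk"

lemma rk_empty: "rk {} = 0"
  using polymatroid by (simp add: polymatroid_def)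

lemma rk_mono: "A \<subseteq> B \<Longrightarrow> B \<subseteq> E \<Longrightarrow> rk A \<le> rk B"
  using polymatroid by (simp add: polymatroid_def)

lemma rk_submod: "A \<subseteq> E \<Longrightarrow> B \<subseteq> E \<Longrightarrow> rk (A \<union> B) + rk (A \<inter> B) \<le> rk A + rk B"
  using polymatroid by (simp add: polymatroid_def)

lemma rk_singleton_le: "e \<in> E \<Longrightarrow> rk {e} \<le> card (pre {e})"
  using polymatroid by (simp add: polymatroid_def fibre_card_def)

lemma finite_subset_Et: "K \<subseteq> Et \<Longrightarrow> finite K"
  using finite_Et finite_subset by blast

lemma rk_Un_le_card_pre:
  assumes "A \<subseteq> E" "B \<subseteq> E"
  shows "rk (A \<union> B) \<le> rk A + card (pre B)"
proof -
  have "finite B"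
    using assms(2) finite_E finite_subset by blast
  then show ?thesis
    using assms(2)
  proof (induction B rule: finite_induct)
    case empty
    then show ?case by simp
  next
    case (insert e B)
    have "rk (A \<union> insert e B) \<le> rk (A \<union> B) + rk {e}"
      using rk_submod[of "A \<union> B" "{e}"] assms(1) insert.prems by simp
    moreover have "rk {e} \<le> card (pre {e})"
      using insert.prems rk_singleton_le[of e] by simp
    moreover have "card (pre (insert e B)) = card (pre B) + card (pre {e})"
      using insert.hyps(2) finite_Et by (subst card_Un_disjoint[symmetric]) (auto intro: arg_cong[where f = card])
    ultimately show ?case
      using insert.IH insert.prems by simp
  qed
qed

lemma rk_Un_le:
  assumes "A \<subseteq> E" "B \<subseteq> E"
  shows "rk (A \<union> B) \<le> rk A + card (pre B - {j. p j \<in> A})"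
proof -
  have "A \<union> (B - A) = A \<union> B" "pre (B - A) = pre B - {j. p j \<in> A}"
    by auto
  then show ?thesis
    using rk_Un_le_card_pre[of A "B - A"] assms by auto
qed

lemma lift_rank_eq_Min:
  "lift_rk U = Min ((\<lambda>A. rk A + card (U - {j. p j \<in> A})) ` Pow E)"
  unfolding lift_rank_def by (rule arg_cong[where f = Min]) auto

lemma lift_rank_le: "A \<subseteq> E \<Longrightarrow> lift_rk U \<le> rk A + card (U - {j. p j \<in> A})"
  unfolding lift_rank_eq_Min using finite_E by (intro Min_le) auto

lemma lift_rank_attained: "\<exists>A \<subseteq> E. lift_rk U = rk A + card (U - {j. p j \<in> A})"
proof -
  have "lift_rk U \<in> (\<lambda>A. rk A + card (U - {j. p j \<in> A})) ` Pow E"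
    unfolding lift_rank_eq_Min using finite_E by (intro Min_in) auto
  then show ?thesis by auto
qed

lemma lift_rank_ge: "(\<And>A. A \<subseteq> E \<Longrightarrow> n \<le> rk A + card (U - {j. p j \<in> A})) \<Longrightarrow> n \<le> lift_rk U"
  using lift_rank_attained[of U] by force

lemma lift_rank_pre_Un_le:
  assumes "F \<subseteq> E" "K \<subseteq> Et"
  shows "lift_rk (pre F \<union> K) \<le> rk F + card K"
proof -
  have "card ((pre F \<union> K) - {j. p j \<in> F}) \<le> card K"
    using assms(2) finite_subset_Et by (intro card_mono) auto
  then show ?thesis
    using lift_rank_le[OF assms(1), of "pre F \<union> K"] by simp
qed

text \<open>Compare a competitor \<open>A\<close> with \<open>A \<union> F\<close>: its rank exceeds \<open>rk F\<close> by at least the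
  number of points of \<open>K\<close> over \<open>A\<close>, and \<open>rk A\<close> by at most the number of points over
  \<open>F\<close> but not over \<open>A\<close>.\<close>
lemma lift_rank_pre_Un_ge:
  assumes "F \<subseteq> E" "K \<subseteq> Et" "K \<inter> pre F = {}"
    and gain: "\<forall>T \<subseteq> K. rk F + card T \<le> rk (F \<union> p ` T)"
  shows "rk F + card K \<le> lift_rk (pre F \<union> K)"
proof (rule lift_rank_ge)
  fix A assume A: "A \<subseteq> E"
  let ?PA = "{j. p j \<in> A}"
  have "finite K"
    using assms(2) finite_subset_Et by blast
  have "card ((pre F - ?PA) \<union> (K - ?PA)) = card (pre F - ?PA) + card (K - ?PA)"
    using assms(3) \<open>finite K\<close> finite_Et by (intro card_Un_disjoint) auto
  moreover have "(pre F - ?PA) \<union> (K - ?PA) = (pre F \<union> K) - ?PA"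
    by blast
  ultimately have "card ((pre F \<union> K) - ?PA) = card (pre F - ?PA) + card (K - ?PA)"
    by simp
  moreover have "rk (A \<union> F) \<le> rk A + card (pre F - ?PA)"
    using rk_Un_le A assms(1) by blast
  moreover have "rk (F \<union> p ` (K \<inter> ?PA)) \<le> rk (A \<union> F)"
    using A assms(1) by (intro rk_mono) auto
  moreover have "rk F + card (K \<inter> ?PA) \<le> rk (F \<union> p ` (K \<inter> ?PA))"
    using gain by blast
  moreover have "card K = card (K \<inter> ?PA) + card (K - ?PA)"
    using \<open>finite K\<close> by (simp add: card_Int_Diff)
  ultimately show "rk F + card K \<le> rk A + card ((pre F \<union> K) - ?PA)"
    by linarith
qed

lemma lift_indep_iff:
  "mat_indep Et lift_rk I \<longleftrightarrow> I \<subseteq> Et \<and> (\<forall>T \<subseteq> I. card T \<le> rk (p ` T))"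
proof
  assume indep: "mat_indep Et lift_rk I"
  then have I: "I \<subseteq> Et" "lift_rk I = card I" "finite I"
    using finite_subset_Et by (auto simp: mat_indep_def)
  have "card T \<le> rk (p ` T)" if "T \<subseteq> I" for T
  proof -
    have "lift_rk I \<le> rk (p ` T) + card (I - {j. p j \<in> p ` T})"
      using that I(1) p_Et by (intro lift_rank_le) auto
    moreover have "card (I - {j. p j \<in> p ` T}) \<le> card (I - T)"
      using I(3) by (intro card_mono) auto
    moreover have "card (I - T) + card T = card I"
      using that I(3) by (metis card_Diff_subset finite_subset le_add_diff_inverse2 card_mono)
    ultimately show ?thesis
      using I(2) by linarith
  qed
  then show "I \<subseteq> Et \<and> (\<forall>T \<subseteq> I. card T \<le> rk (p ` T))"
    using I(1) by blast
next
  assume I: "I \<subseteq> Et \<and> (\<forall>T \<subseteq> I. card T \<le> rk (p ` T))"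
  have "lift_rk I \<le> card I"
    using lift_rank_le[of "{}" I] rk_empty by simp
  moreover have "card I \<le> lift_rk (pre {} \<union> I)"
    using lift_rank_pre_Un_ge[of "{}" I] I rk_empty by simp
  ultimately show "mat_indep Et lift_rk I"
    using I by (simp add: mat_indep_def)
qed

section \<open>Strict independence over a flat\<close>

text \<open>Condition (2) in the definition of the augmented Bergman fan of the polymatroid says that
  \<open>S - \<pi>\<^sup>-\<^sup>1(F)\<close> is strictly independent over each \<open>F\<close> of the chain.\<close>
definition strictly_indep_over :: "'a set \<Rightarrow> 'b set \<Rightarrow> bool" where
  "strictly_indep_over F K \<longleftrightarrow> (\<forall>T. T \<subseteq> K \<and> T \<noteq> {} \<longrightarrow> rk F + card T < rk (F \<union> p ` T))"

lemma strictly_indep_over_subset: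
  "strictly_indep_over F K \<Longrightarrow> K' \<subseteq> K \<Longrightarrow> strictly_indep_over F K'"
  unfolding strictly_indep_over_def by blast

lemma strictly_indep_overD:
  "strictly_indep_over F K \<Longrightarrow> T \<subseteq> K \<Longrightarrow> T \<noteq> {} \<Longrightarrow> rk F + card T < rk (F \<union> p ` T)"
  unfolding strictly_indep_over_def by blast

lemma strictly_indep_over_less:
  assumes "strictly_indep_over F K" "F \<subseteq> A" "A \<subseteq> E" "K \<inter> pre A \<noteq> {}"
  shows "rk F + card (K \<inter> pre A) < rk A"
proof -
  have "rk F + card (K \<inter> pre A) < rk (F \<union> p ` (K \<inter> pre A))"
    using assms(1,4) unfolding strictly_indep_over_def by simp
  moreover have "rk (F \<union> p ` (K \<inter> pre A)) \<le> rk A"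
    using assms(2,3) by (intro rk_mono) auto
  ultimately show ?thesis
    by simp
qed

lemma strictly_indep_over_le:
  assumes "strictly_indep_over F K" "F \<subseteq> A" "A \<subseteq> E"
  shows "rk F + card (K \<inter> pre A) \<le> rk A"
  using strictly_indep_over_less[OF assms] rk_mono[OF assms(2,3)]
  by (cases "K \<inter> pre A = {}") auto

lemma strictly_indep_overI:
  assumes "F \<subseteq> E" "K \<subseteq> Et"
    and gain: "\<And>A. F \<subseteq> A \<Longrightarrow> A \<subseteq> E \<Longrightarrow> K \<inter> pre A \<noteq> {} \<Longrightarrow> rk F + card (K \<inter> pre A) < rk A"
  shows "strictly_indep_over F K"
  unfolding strictly_indep_over_def
proof (intro allI impI)
  fix T assume T: "T \<subseteq> K \<and> T \<noteq> {}"
  let ?A = "F \<union> p ` T"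
  have T_sub: "T \<subseteq> K \<inter> pre ?A"
    using T assms(2) by blast
  have "?A \<subseteq> E"
    using T assms(1,2) p_Et by blast
  then have "rk F + card (K \<inter> pre ?A) < rk ?A"
    using T T_sub by (intro gain) auto
  moreover have "card T \<le> card (K \<inter> pre ?A)"
    using T_sub finite_Et by (intro card_mono) auto
  ultimately show "rk F + card T < rk ?A"
    by simp
qed

text \<open>A test set \<open>A\<close> is split into \<open>A \<inter> F'\<close> and \<open>A \<union> F'\<close>; submodularity adds up the
  two rank gains.\<close>
lemma strictly_indep_over_trans:
  assumes "F \<subseteq> F'" "F' \<subseteq> E" "J \<subseteq> Et" "K' \<subseteq> Et"
    and J: "strictly_indep_over F J" and K': "strictly_indep_over F' K'"
    and K: "K \<subseteq> (J \<inter> pre F') \<union> K'"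
  shows "strictly_indep_over F K"
proof (rule strictly_indep_overI)
  show "F \<subseteq> E" "K \<subseteq> Et"
    using K assms(1-4) by auto
  fix A assume A: "F \<subseteq> A" "A \<subseteq> E" "K \<inter> pre A \<noteq> {}"
  show "rk F + card (K \<inter> pre A) < rk A"
  proof -
    let ?X = "J \<inter> pre (A \<inter> F')" and ?Y = "K' \<inter> pre (A \<union> F')"
    have "K \<inter> pre A \<subseteq> ?X \<union> ?Y"
      using K by blast
    then have "card (K \<inter> pre A) \<le> card (?X \<union> ?Y)"
      using finite_Et by (intro card_mono) auto
    then have card_le: "card (K \<inter> pre A) \<le> card ?X + card ?Y"
      using card_Un_le[of ?X ?Y] by linarith
    have X_le: "rk F + card ?X \<le> rk (A \<inter> F')"
      by (rule strictly_indep_over_le[OF J]) (use A assms(1,2) in auto)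
    have Y_le: "rk F' + card ?Y \<le> rk (A \<union> F')"
      by (rule strictly_indep_over_le[OF K']) (use A assms(2) in auto)
    have submod: "rk (A \<union> F') + rk (A \<inter> F') \<le> rk A + rk F'"
      using rk_submod A assms(2) by blast
    have "?X \<noteq> {} \<or> ?Y \<noteq> {}"
      using A(3) \<open>K \<inter> pre A \<subseteq> ?X \<union> ?Y\<close> by blast
    then show ?thesis
    proof
      assume "?X \<noteq> {}"
      then have "rk F + card ?X < rk (A \<inter> F')"
        by (intro strictly_indep_over_less[OF J]) (use A assms(1,2) in auto)
      then show ?thesis
        using card_le Y_le submod by linarith
    next
      assume "?Y \<noteq> {}"
      then have "rk F' + card ?Y < rk (A \<union> F')"
        by (intro strictly_indep_over_less[OF K']) (use A assms(2) in auto)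
      then show ?thesis
        using card_le X_le submod by linarith
    qed
  qed
qed

lemma sigma_cone_in_aug_bergman_poly:
  assumes "compatible E Et p S Fs" "\<forall>F\<in>set Fs. is_flat E rk F \<and> F \<noteq> E"
    and "\<forall>T \<subseteq> S. card T \<le> rk (p ` T)"
    and "\<forall>F\<in>set Fs. strictly_indep_over F (S - {j. p j \<in> F})"
  shows "sigma_cone Et p S Fs \<in> aug_bergman_poly E Et p rk"
proof -
  have "S \<subseteq> Et"
    using assms(1) by (simp add: compatible_def)
  then have "S - {j. p j \<in> E} = {}"
    using p_Et by blast
  then have "\<forall>F\<in>set (Fs @ [E]). \<forall>T. T \<subseteq> S - {j. p j \<in> F} \<and> T \<noteq> {} \<longrightarrow> rk (F \<union> p ` T) > rk F + card T"
    using assms(4) by (auto simp: strictly_indep_over_def)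
  then show ?thesis
    using assms(1-3) unfolding aug_bergman_poly_def by blast
qed

lemma aug_bergman_polyE:
  assumes "D \<in> aug_bergman_poly E Et p rk"
  obtains S Fs where "D = sigma_cone Et p S Fs" "compatible E Et p S Fs"
    "\<forall>F\<in>set Fs. is_flat E rk F \<and> F \<noteq> E" "\<forall>T \<subseteq> S. card T \<le> rk (p ` T)"
    "\<forall>F\<in>set Fs. strictly_indep_over F (S - {j. p j \<in> F})"
  using assms unfolding aug_bergman_poly_def strictly_indep_over_def by fastforce

text \<open>The strict inequality for \<open>T - {y}\<close> leaves room for \<open>y\<close>; for \<open>T = {y}\<close> the flatness
  of \<open>F\<close> is used.\<close>
lemma strictly_indep_over_insert:
  assumes F: "is_flat E rk F" and K: "strictly_indep_over F K" "K \<subseteq> Et"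
    and y: "y \<in> Et - (pre F \<union> K)" and T: "T \<subseteq> insert y K"
  shows "rk F + card T \<le> rk (F \<union> p ` T)"
proof (cases "T - {y} = {}")
  case True
  have "p y \<in> E - F"
    using y p_Et by blast
  then have "rk F < rk (insert (p y) F)"
    using F by (simp add: is_flat_def)
  moreover have "T = {} \<or> T = {y}"
    using True by blast
  ultimately show ?thesis
    by (elim disjE) simp_all
next
  case False
  have T_Et: "T \<subseteq> Et"
    using T K(2) y by blast
  then have "card T \<le> card (T - {y}) + 1"
    using finite_subset_Et[of T]
    by (cases "y \<in> T") (auto simp: card_Diff_singleton_if card_gt_0_iff)
  moreover have "rk F + card (T - {y}) < rk (F \<union> p ` (T - {y}))"
    using K(1) False T by (intro strictly_indep_overD) auto
  moreover have "rk (F \<union> p ` (T - {y})) \<le> rk (F \<union> p ` T)"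
    using F T_Et p_Et by (intro rk_mono) (auto simp: is_flat_def)
  ultimately show ?thesis
    by linarith
qed


lemma is_flat_pre_Un:
  assumes F: "is_flat E rk F" and K: "strictly_indep_over F K" "K \<subseteq> Et" "K \<inter> pre F = {}"
  shows "is_flat Et lift_rk (pre F \<union> K)"
  unfolding is_flat_def
proof (intro conjI ballI)
  show "pre F \<union> K \<subseteq> Et"
    using K by blast
  fix y assume y: "y \<in> Et - (pre F \<union> K)"
  have FE: "F \<subseteq> E"
    using F by (simp add: is_flat_def)
  have "\<forall>T \<subseteq> insert y K. rk F + card T \<le> rk (F \<union> p ` T)"
    using strictly_indep_over_insert[OF F K(1,2) y] by blast
  then have "rk F + card (insert y K) \<le> lift_rk (pre F \<union> insert y K)"
    by (intro lift_rank_pre_Un_ge[OF FE]) (use y K in auto)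
  moreover have "card (insert y K) = card K + 1"
    using y K(2) finite_subset_Et by simp
  moreover have "lift_rk (pre F \<union> K) \<le> rk F + card K"
    using lift_rank_pre_Un_le FE K(2) by blast
  moreover have "pre F \<union> insert y K = insert y (pre F \<union> K)"
    by blast
  ultimately show "lift_rk (pre F \<union> K) < lift_rk (insert y (pre F \<union> K))"
    by simp
qed

section \<open>Flats of the lift\<close>

definition full_fibres :: "'b set \<Rightarrow> 'a set" where
  "full_fibres G = {e \<in> E. \<forall>j\<in>Et. p j = e \<longrightarrow> j \<in> G}"

definition partial_fibres :: "'b set \<Rightarrow> 'b set" where
  "partial_fibres G = G - pre (full_fibres G)"

lemma full_fibres_subset: "full_fibres G \<subseteq> E"
  by (auto simp: full_fibres_def)

lemma pre_full_fibres_subset: "pre (full_fibres G) \<subseteq> G"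
  by (auto simp: full_fibres_def)

lemma full_fibres_mono: "G \<subseteq> G' \<Longrightarrow> full_fibres G \<subseteq> full_fibres G'"
  by (auto simp: full_fibres_def)

lemma partial_fibres_subset: "partial_fibres G \<subseteq> G"
  by (auto simp: partial_fibres_def)

lemma finite_partial_fibres: "G \<subseteq> Et \<Longrightarrow> finite (partial_fibres G)"
  using partial_fibres_subset finite_subset_Et by (meson order.trans)

lemma pre_full_fibres_Un_partial_fibres: "pre (full_fibres G) \<union> partial_fibres G = G"
  using pre_full_fibres_subset by (auto simp: partial_fibres_def)

lemma not_in_full_fibres: "e \<in> E - full_fibres G \<Longrightarrow> \<exists>y\<in>Et - G. p y = e"
  by (auto simp: full_fibres_def)

lemma full_fibres_neq_E:
  assumes "G \<subseteq> Et" "G \<noteq> Et"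
  shows "full_fibres G \<noteq> E"
proof
  assume "full_fibres G = E"
  then have "Et \<subseteq> G"
    using p_Et by (auto simp: full_fibres_def)
  then show False
    using assms by blast
qed

lemma rk_full_fibres_le:
  assumes G: "is_flat Et lift_rk G"
  shows "rk (full_fibres G) + card (partial_fibres G) \<le> lift_rk G"
proof -
  have "G \<subseteq> Et"
    using G by (simp add: is_flat_def)
  obtain A where A: "A \<subseteq> E" "lift_rk G = rk A + card (G - {j. p j \<in> A})"
    using lift_rank_attained by blast
  have "pre A \<subseteq> G"
  proof
    fix y assume y: "y \<in> pre A"
    show "y \<in> G"
    proof (rule ccontr)
      assume "y \<notin> G"
      then have "lift_rk G < lift_rk (insert y G)"
        using G y by (auto simp: is_flat_def)
      moreover have "lift_rk (insert y G) \<le> rk A + card (insert y G - {j. p j \<in> A})"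
        using lift_rank_le A(1) by blast
      ultimately show False
        using A(2) y by simp
    qed
  qed
  then have AF: "A \<subseteq> full_fibres G"
    using A(1) by (auto simp: full_fibres_def)
  let ?F = "full_fibres G" and ?PA = "{j. p j \<in> A}"
  have "G - ?PA = (pre ?F - ?PA) \<union> partial_fibres G"
    using AF pre_full_fibres_subset \<open>G \<subseteq> Et\<close> by (auto simp: partial_fibres_def)
  moreover have "finite G"
    using \<open>G \<subseteq> Et\<close> finite_subset_Et by blast
  ultimately have "card (G - ?PA) = card (pre ?F - ?PA) + card (partial_fibres G)"
    using finite_Et partial_fibres_subset[of G]
    by (simp add: card_Un_disjoint finite_subset partial_fibres_def Int_Diff Diff_Int_distrib2)
  moreover have "rk (A \<union> ?F) \<le> rk A + card (pre ?F - ?PA)"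
    using rk_Un_le A(1) full_fibres_subset by blast
  moreover have "A \<union> ?F = ?F"
    using AF by blast
  ultimately show ?thesis
    using A(2) by simp
qed

text \<open>Flatness of \<open>G\<close>: adjoining \<open>y\<close> raises the lift rank, and the competitor \<open>A\<close> in the
  definition of the lift rank bounds the rank of \<open>insert y G\<close> from above.\<close>
lemma rk_full_fibres_less:
  assumes G: "is_flat Et lift_rk G" and y: "y \<in> Et - G"
    and A: "A \<subseteq> E" "full_fibres G \<subseteq> A" "p y \<in> A"
  shows "rk (full_fibres G) + card (partial_fibres G) < rk A + card (partial_fibres G - pre A)"
proof -
  have "insert y G - {j. p j \<in> A} \<subseteq> partial_fibres G - pre A"
    using A(2,3) G pre_full_fibres_subset[of G] by (auto simp: partial_fibres_def is_flat_def)
  then have "card (insert y G - {j. p j \<in> A}) \<le> card (partial_fibres G - pre A)"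
    using G finite_subset_Et by (intro card_mono) (auto simp: is_flat_def partial_fibres_def)
  moreover have "lift_rk G < lift_rk (insert y G)"
    using G y by (auto simp: is_flat_def)
  moreover have "lift_rk (insert y G) \<le> rk A + card (insert y G - {j. p j \<in> A})"
    using lift_rank_le A(1) by blast
  ultimately show ?thesis
    using rk_full_fibres_le[OF G] by linarith
qed

lemma is_flat_full_fibres:
  assumes G: "is_flat Et lift_rk G"
  shows "is_flat E rk (full_fibres G)"
  unfolding is_flat_def
proof (intro conjI ballI)
  show "full_fibres G \<subseteq> E"
    by (rule full_fibres_subset)
  fix e assume e: "e \<in> E - full_fibres G"
  then obtain y where y: "y \<in> Et - G" "p y = e"
    using not_in_full_fibres by blast
  have "rk (full_fibres G) + card (partial_fibres G)
      < rk (insert e (full_fibres G)) + card (partial_fibres G - pre (insert e (full_fibres G)))"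
    using e y full_fibres_subset by (intro rk_full_fibres_less[OF G]) auto
  moreover have "card (partial_fibres G - pre (insert e (full_fibres G))) \<le> card (partial_fibres G)"
    using G finite_partial_fibres by (intro card_mono) (auto simp: is_flat_def)
  ultimately show "rk (full_fibres G) < rk (insert e (full_fibres G))"
    by linarith
qed

lemma strictly_indep_over_partial_fibres:
  assumes G: "is_flat Et lift_rk G"
  shows "strictly_indep_over (full_fibres G) (partial_fibres G)"
  unfolding strictly_indep_over_def
proof (intro allI impI)
  let ?F = "full_fibres G" and ?J = "partial_fibres G"
  fix T assume T: "T \<subseteq> ?J \<and> T \<noteq> {}"
  have J: "?J \<subseteq> Et" "finite ?J"
    using G partial_fibres_subset finite_subset_Et by (auto simp: is_flat_def) blast
  obtain t where t: "t \<in> T"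
    using T by blast
  then have "p t \<in> E - ?F"
    using T J p_Et by (auto simp: partial_fibres_def)
  then obtain y where y: "y \<in> Et - G" "p y = p t"
    using not_in_full_fibres by blast
  have "?F \<union> p ` T \<subseteq> E"
    using T J p_Et full_fibres_subset by blast
  then have "rk ?F + card ?J < rk (?F \<union> p ` T) + card (?J - pre (?F \<union> p ` T))"
    using t y by (intro rk_full_fibres_less[OF G]) auto
  moreover have "card (?J - pre (?F \<union> p ` T)) \<le> card (?J - T)"
    using J by (intro card_mono) auto
  moreover have "card (?J - T) + card T = card ?J"
    using T J by (metis card_Diff_subset card_mono finite_subset le_add_diff_inverse2)
  ultimately show "rk ?F + card T < rk (?F \<union> p ` T)"
    by linarith
qed

text \<open>Submodularity splits \<open>p ` T\<close> along \<open>F\<close>.\<close>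
lemma card_le_rk_Un_strictly_indep:
  assumes "F \<subseteq> E" "U \<subseteq> Et" "T \<subseteq> Et"
    and I: "\<forall>T' \<subseteq> T \<inter> pre F. card T' \<le> rk (p ` T')"
    and U: "strictly_indep_over F U" "T - pre F \<subseteq> U"
  shows "card T \<le> rk (p ` T)"
proof -
  let ?T0 = "T \<inter> pre F" and ?A = "F \<union> p ` T"
  have pT: "p ` T \<subseteq> E"
    using assms(3) p_Et by blast
  have "rk F + card (U \<inter> pre ?A) \<le> rk ?A"
    using strictly_indep_over_le[OF U(1)] assms(1) pT by blast
  moreover have "card (T - pre F) \<le> card (U \<inter> pre ?A)"
    using U(2) assms(3) finite_Et by (intro card_mono) auto
  moreover have "rk (p ` T \<union> F) + rk (p ` T \<inter> F) \<le> rk (p ` T) + rk F"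
    using rk_submod pT assms(1) by blast
  moreover have "rk (p ` ?T0) \<le> rk (p ` T \<inter> F)"
    using pT by (intro rk_mono) auto
  moreover have "card ?T0 \<le> rk (p ` ?T0)"
    using I by blast
  moreover have "card T = card ?T0 + card (T - pre F)"
    using assms(3) finite_subset_Et by (metis card_Int_Diff)
  moreover have "rk ?A = rk (p ` T \<union> F)"
    by (simp add: Un_commute)
  ultimately show ?thesis
    by linarith
qed

lemma strictly_indep_over_Union_partial_fibres:
  assumes "sorted_wrt (\<subset>) Gs" "Gs \<noteq> []" "\<forall>G\<in>set Gs. is_flat Et lift_rk G"
  shows "strictly_indep_over (full_fibres (hd Gs)) (\<Union>(partial_fibres ` set Gs))"
  using assms
proof (induction Gs)
  case Nil
  then show ?case by simp
next
  case (Cons G Gs)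
  have GEt: "G \<subseteq> Et" and G: "strictly_indep_over (full_fibres G) (partial_fibres G)"
    using Cons.prems(3) strictly_indep_over_partial_fibres by (auto simp: is_flat_def)
  show ?case
  proof (cases "Gs = []")
    case True
    then show ?thesis
      using G by simp
  next
    case False
    have IH: "strictly_indep_over (full_fibres (hd Gs)) (\<Union>(partial_fibres ` set Gs))"
      using Cons False by simp
    have hd: "hd Gs \<in> set Gs" "G \<subseteq> hd Gs"
      using Cons.prems(1) False by auto
    have flats_Et: "\<Union>(partial_fibres ` set Gs) \<subseteq> Et"
      using Cons.prems(3) partial_fibres_subset by (fastforce simp: is_flat_def)
    have "partial_fibres G - pre (full_fibres (hd Gs)) \<subseteq> partial_fibres (hd Gs)"
      using hd(2) GEt partial_fibres_subset[of G] by (auto simp: partial_fibres_def)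
    then have "partial_fibres G \<union> \<Union>(partial_fibres ` set Gs)
        \<subseteq> (partial_fibres G \<inter> pre (full_fibres (hd Gs))) \<union> \<Union>(partial_fibres ` set Gs)"
      using hd(1) by blast
    then have "strictly_indep_over (full_fibres G) (partial_fibres G \<union> \<Union>(partial_fibres ` set Gs))"
      using full_fibres_mono[OF hd(2)] full_fibres_subset GEt partial_fibres_subset[of G] flats_Et
      by (intro strictly_indep_over_trans[OF _ _ _ _ G IH]) auto
    then show ?thesis
      by simp
  qed
qed

section \<open>Cones of the lift lie in cones of the polymatroid fan\<close>

context
  fixes I :: "'b set" and Gs :: "'b set list"
  assumes Gs_sorted: "sorted_wrt (\<subset>) (Gs @ [Et])"
    and Gs_flats: "\<forall>G\<in>set Gs. is_flat Et lift_rk G \<and> G \<noteq> Et"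
    and I_subset_hd: "I \<subseteq> hd (Gs @ [Et])"
begin

abbreviation coarse_support :: "'b set" where
  "coarse_support \<equiv> I \<union> \<Union>(partial_fibres ` set Gs)"

lemma Gs_subset_Et: "G \<in> set Gs \<Longrightarrow> G \<subseteq> Et"
  using Gs_flats by (simp add: is_flat_def)

lemma I_subset: "G \<in> set (Gs @ [Et]) \<Longrightarrow> I \<subseteq> G"
  using I_subset_hd sorted_wrt_psubset_hd_subset[OF Gs_sorted] by blast

lemma Union_partial_fibres_subset_Et: "\<Union>(partial_fibres ` set Gs) \<subseteq> Et"
  using Gs_subset_Et partial_fibres_subset by blast

text \<open>If the preimage of \<open>A\<close> lies in \<open>coarse_support\<close>, then it lies in
  every \<open>G\<close>: otherwise take the largest \<open>G\<close> missing a point \<open>j\<close> of it; \<open>j\<close> is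
  then a partial-fibre point of some larger member, whose full fibres contain \<open>p j\<close>.\<close>
lemma full_fibres_cover:
  assumes A: "A \<subseteq> E" "pre A \<subseteq> coarse_support" and G: "G \<in> set Gs"
  shows "A \<subseteq> full_fibres G"
proof -
  have sub_iff: "A \<subseteq> full_fibres G' \<longleftrightarrow> pre A \<subseteq> G'" for G'
    using A(1) by (auto simp: full_fibres_def)
  let ?X = "{G' \<in> set Gs. \<not> pre A \<subseteq> G'}"
  have "?X = {}"
  proof (rule ccontr)
    assume "?X \<noteq> {}"
    moreover have "chain\<^sub>\<subseteq> ?X"
      using sorted_wrt_psubset_chain[OF Gs_sorted] by (auto simp: chain_subset_def)
    ultimately have M: "\<Union>?X \<in> ?X"
      by (intro finite_chain_Union_mem) auto
    then obtain j where j: "j \<in> pre A" "j \<notin> \<Union>?X"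
      by blast
    have "I \<subseteq> \<Union>?X"
      using I_subset M by auto
    then obtain G' where G': "G' \<in> set Gs" "j \<in> partial_fibres G'"
      using j A(2) by blast
    then have "G' \<notin> ?X"
      using j partial_fibres_subset by blast
    then have "p j \<in> full_fibres G'"
      using G'(1) j(1) sub_iff by blast
    then show False
      using G'(2) j(1) by (auto simp: partial_fibres_def)
  qed
  then show ?thesis
    using G sub_iff by blast
qed

lemma card_le_rk_coarse_support:
  assumes I: "mat_indep Et lift_rk I" and T: "T \<subseteq> coarse_support"
  shows "card T \<le> rk (p ` T)"
proof (cases "Gs = []")
  case True
  then show ?thesis
    using I T lift_indep_iff by auto
next
  case False
  let ?F = "full_fibres (hd Gs)"
  have hd: "hd Gs \<in> set Gs" "hd (Gs @ [Et]) = hd Gs"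
    using False by auto
  have "T \<inter> pre ?F \<subseteq> I"
  proof
    fix j assume j: "j \<in> T \<inter> pre ?F"
    show "j \<in> I"
    proof (rule ccontr)
      assume "j \<notin> I"
      then obtain G where G: "G \<in> set Gs" "j \<in> partial_fibres G"
        using j T by blast
      have "hd Gs \<subseteq> G"
        using sorted_wrt_psubset_hd_subset[OF Gs_sorted] G(1) hd(2) by auto
      then show False
        using G(2) j full_fibres_mono by (auto simp: partial_fibres_def)
    qed
  qed
  then have "\<forall>T' \<subseteq> T \<inter> pre ?F. card T' \<le> rk (p ` T')"
    using I lift_indep_iff by (meson order_trans)
  moreover have "T - pre ?F \<subseteq> \<Union>(partial_fibres ` set Gs)"
    using T I_subset_hd hd Gs_subset_Et by (auto simp: partial_fibres_def)
  moreover have "strictly_indep_over ?F (\<Union>(partial_fibres ` set Gs))"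
    using Gs_sorted Gs_flats False
    by (intro strictly_indep_over_Union_partial_fibres) (auto simp: sorted_wrt_append)
  moreover have "T \<subseteq> Et"
    using T I Union_partial_fibres_subset_Et by (auto simp: mat_indep_def)
  ultimately show ?thesis
    using full_fibres_subset Union_partial_fibres_subset_Et
    by (intro card_le_rk_Un_strictly_indep) auto
qed

lemma strictly_indep_over_coarse_support:
  assumes G: "G \<in> set Gs"
  shows "strictly_indep_over (full_fibres G)
           (coarse_support - {j. p j \<in> full_fibres G})"
proof -
  obtain xs ys where split: "Gs = xs @ G # ys"
    using split_list[OF G] by blast
  then have sorted: "sorted_wrt (\<subset>) (G # ys)" and below: "\<forall>G'\<in>set xs. G' \<subset> G"
    using Gs_sorted by (auto simp: sorted_wrt_append)
  let ?U = "\<Union>(partial_fibres ` set (G # ys))"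
  have "strictly_indep_over (full_fibres G) ?U"
    using strictly_indep_over_Union_partial_fibres[OF sorted] Gs_flats split by simp
  moreover have "coarse_support - {j. p j \<in> full_fibres G} \<subseteq> ?U"
  proof
    fix j assume j: "j \<in> coarse_support - {j. p j \<in> full_fibres G}"
    have in_G: "j \<in> partial_fibres G" if "j \<in> G"
      using that j Gs_subset_Et[OF G] by (auto simp: partial_fibres_def)
    consider "j \<in> I" | G' where "G' \<in> set xs" "j \<in> partial_fibres G'"
      | G' where "G' \<in> set (G # ys)" "j \<in> partial_fibres G'"
      using j split by auto
    then show "j \<in> ?U"
    proof cases
      case 1
      then show ?thesis
        using in_G I_subset[of G] G by auto
    next
      case 2
      then have "G' \<subseteq> G"
        using below by auto
      then show ?thesis
        using 2(2) in_G partial_fibres_subset[of G'] by auto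
    next
      case 3
      then show ?thesis
        by blast
    qed
  qed
  ultimately show ?thesis
    by (rule strictly_indep_over_subset)
qed

lemma sigma_cone_id_subset_coarsening:
  assumes "set Fs = full_fibres ` set Gs"
  shows "sigma_cone Et id I Gs \<subseteq> sigma_cone Et p coarse_support Fs"
proof (rule sigma_cone_subsetI)
  have "I \<subseteq> Et"
    using I_subset[of Et] by simp
  then show "finite I"
    using finite_subset_Et by blast
  have fin_S: "finite coarse_support"
    using \<open>finite I\<close> Union_partial_fibres_subset_Et finite_subset_Et by auto
  show "\<forall>j\<in>I. vec_ind {j} \<in> sigma_cone Et p coarse_support Fs"
    using sigma_cone_unit_generator[OF fin_S] by blast
  show "\<forall>G\<in>set Gs. (\<lambda>j. - vec_ind (Et - {j \<in> Et. id j \<in> G}) j)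
          \<in> sigma_cone Et p coarse_support Fs"
  proof
    fix G assume G: "G \<in> set Gs"
    have "{j \<in> Et. id j \<in> G} = pre (full_fibres G) \<union> partial_fibres G"
      using pre_full_fibres_Un_partial_fibres Gs_subset_Et[OF G] by auto
    moreover have "(\<lambda>j. - vec_ind (Et - (pre (full_fibres G) \<union> partial_fibres G)) j)
        \<in> sigma_cone Et p coarse_support Fs"
      using G assms Gs_subset_Et[OF G] partial_fibres_subset[of G]
      by (intro sigma_cone_flat_Un_generator fin_S) auto
    ultimately show "(\<lambda>j. - vec_ind (Et - {j \<in> Et. id j \<in> G}) j)
        \<in> sigma_cone Et p coarse_support Fs"
      by simp
  qed
qed

lemma full_fibres_sorted_list: "\<exists>Fs. set Fs = full_fibres ` set Gs \<and> sorted_wrt (\<subset>) (Fs @ [E])"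
proof (rule finite_chain_sorted_list)
  have "chain\<^sub>\<subseteq> (set Gs)"
    using sorted_wrt_psubset_chain[of Gs] Gs_sorted by (simp add: sorted_wrt_append)
  then show "chain\<^sub>\<subseteq> (full_fibres ` set Gs)"
    unfolding chain_subset_def by (blast dest: full_fibres_mono)
  show "\<forall>F\<in>full_fibres ` set Gs. F \<subset> E"
  proof
    fix F assume "F \<in> full_fibres ` set Gs"
    then obtain G where "G \<in> set Gs" "F = full_fibres G"
      by blast
    then show "F \<subset> E"
      using Gs_subset_Et[of G] Gs_flats full_fibres_subset[of G] full_fibres_neq_E[of G] by auto
  qed
qed simp

lemma coarsening_in_aug_bergman_poly:
  assumes indep: "mat_indep Et lift_rk I"
    and Fs: "set Fs = full_fibres ` set Gs" "sorted_wrt (\<subset>) (Fs @ [E])"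
  shows "sigma_cone Et p coarse_support Fs \<in> aug_bergman_poly E Et p rk"
proof (rule sigma_cone_in_aug_bergman_poly)
  have "A \<subseteq> hd (Fs @ [E])" if "A \<subseteq> E" "pre A \<subseteq> coarse_support" for A
  proof -
    have "hd (Fs @ [E]) \<in> set (Fs @ [E])"
      by (cases Fs) auto
    then consider "hd (Fs @ [E]) = E" | G where "G \<in> set Gs" "hd (Fs @ [E]) = full_fibres G"
      using Fs(1) by auto
    then show ?thesis
      by cases (use that full_fibres_cover in auto)
  qed
  moreover have "coarse_support \<subseteq> Et"
    using I_subset[of Et] Union_partial_fibres_subset_Et by auto
  ultimately show "compatible E Et p coarse_support Fs"
    using Fs(2) by (auto simp: compatible_def is_chain_def first_flat_def)
  show "\<forall>F\<in>set Fs. is_flat E rk F \<and> F \<noteq> E"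
  proof
    fix F assume "F \<in> set Fs"
    then obtain G where "G \<in> set Gs" "F = full_fibres G"
      using Fs(1) by auto
    then show "is_flat E rk F \<and> F \<noteq> E"
      using Gs_subset_Et[of G] Gs_flats is_flat_full_fibres full_fibres_neq_E[of G] by auto
  qed
  show "\<forall>T \<subseteq> coarse_support. card T \<le> rk (p ` T)"
    using card_le_rk_coarse_support indep by blast
  show "\<forall>F\<in>set Fs. strictly_indep_over F (coarse_support - {j. p j \<in> F})"
    using strictly_indep_over_coarse_support Fs(1) by auto
qed

end

lemma aug_bergman_mat_cone_subset:
  assumes "C \<in> aug_bergman_mat Et lift_rk"
  shows "\<exists>D \<in> aug_bergman_poly E Et p rk. C \<subseteq> D"
proof -
  obtain I Gs where C: "C = sigma_cone Et id I Gs" and sorted: "sorted_wrt (\<subset>) (Gs @ [Et])"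
    and flats: "\<forall>G\<in>set Gs. is_flat Et lift_rk G \<and> G \<noteq> Et"
    and indep: "mat_indep Et lift_rk I" and I_hd: "I \<subseteq> hd (Gs @ [Et])"
    using assms by (rule aug_bergman_matE)
  obtain Fs where Fs: "set Fs = full_fibres ` set Gs" "sorted_wrt (\<subset>) (Fs @ [E])"
    using full_fibres_sorted_list[OF sorted flats I_hd] by blast
  let ?D = "sigma_cone Et p (I \<union> \<Union>(partial_fibres ` set Gs)) Fs"
  have "?D \<in> aug_bergman_poly E Et p rk"
    by (rule coarsening_in_aug_bergman_poly[OF sorted flats I_hd indep Fs])
  moreover have "C \<subseteq> ?D"
    unfolding C by (rule sigma_cone_id_subset_coarsening[OF sorted flats I_hd Fs(1)])
  ultimately show ?thesis
    by blast
qed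

section \<open>Cones of the polymatroid fan are unions of cones of the lift\<close>

text \<open>The member \<open>F\<close> is the sublevel set \<open>{e. depth \<le> -t}\<close> of the chain; a point of the
  superlevel set outside \<open>pre F\<close> needs a positive part, so it lies in \<open>S\<close>.\<close>
lemma superlevel_preimage_decomposition:
  assumes sorted: "sorted_wrt (\<subset>) (Fs @ [E])" and Fs_E: "\<forall>F\<in>set Fs. F \<subseteq> E"
    and c: "\<forall>F. 0 \<le> c F" and P: "\<forall>j. 0 \<le> P j" "\<forall>j. j \<notin> S \<longrightarrow> P j = 0"
    and x: "\<forall>j\<in>Et. x j = P j - depth (set Fs) c (p j)"
    and t: "t \<le> 0" "superlevel Et x t \<noteq> Et"
  obtains F where "F \<in> set Fs" "pre F \<subseteq> superlevel Et x t" "superlevel Et x t - pre F \<subseteq> S"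
proof -
  let ?L = "set (Fs @ [E])"
  define F where "F = {e \<in> E. depth ?L c e \<le> - t}"
  have depth_eq: "depth ?L c e = depth (set Fs) c e" if "e \<in> E" for e
    using depth_insert[of "set Fs" e E c] that by simp
  have "F \<in> ?L"
    unfolding F_def using sorted_wrt_psubset_chain[OF sorted] Fs_E c t(1)
    by (intro depth_sublevel_mem_chain) auto
  moreover have pre_F: "pre F \<subseteq> superlevel Et x t"
  proof
    fix j assume "j \<in> pre F"
    then have "j \<in> Et" "depth (set Fs) c (p j) \<le> - t"
      using depth_eq by (auto simp: F_def)
    then show "j \<in> superlevel Et x t"
      using x P(1)[rule_format, of j] by (auto simp: superlevel_def)
  qed
  moreover have "F \<noteq> E"
  proof
    assume "F = E"
    then have "superlevel Et x t = Et"
      using pre_F p_Et by (auto simp: superlevel_def)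
    then show False
      using t(2) by simp
  qed
  moreover have "superlevel Et x t - pre F \<subseteq> S"
  proof
    fix j assume j: "j \<in> superlevel Et x t - pre F"
    then have "j \<in> Et" "- t < depth (set Fs) c (p j)" "t \<le> x j"
      using p_Et depth_eq by (auto simp: F_def superlevel_def)
    then have "0 < P j"
      using x by auto
    then show "j \<in> S"
      using P(2) by force
  qed
  ultimately show thesis
    using that by auto
qed

lemma superlevel_set_flat:
  assumes sorted: "sorted_wrt (\<subset>) (Fs @ [E])" and flats: "\<forall>F\<in>set Fs. is_flat E rk F \<and> F \<noteq> E"
    and strict: "\<forall>F\<in>set Fs. strictly_indep_over F (S - {j. p j \<in> F})"
    and S: "S \<subseteq> Et" and x: "x \<in> sigma_cone Et p S Fs" and A: "A \<in> superlevel_sets Et x"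
  shows "is_flat Et lift_rk A \<and> (\<lambda>j. - vec_ind (Et - A) j) \<in> sigma_cone Et p S Fs"
proof -
  have fin_S: "finite S"
    using S finite_subset_Et by blast
  obtain c P where c: "\<forall>F. 0 \<le> c F" and P: "\<forall>j. 0 \<le> P j" "\<forall>j. j \<notin> S \<longrightarrow> P j = 0"
    and x_eq: "\<forall>j. x j = P j - (if j \<in> Et then depth (set Fs) c (p j) else 0)"
    by (rule sigma_cone_coordinates[OF fin_S S x])
  have x_Et: "\<forall>j\<in>Et. x j = P j - depth (set Fs) c (p j)"
    using x_eq by simp
  obtain t where t: "t \<le> 0" "superlevel Et x t \<noteq> Et" and A_t: "A = superlevel Et x t"
    using A by (auto simp: superlevel_sets_def)
  have "\<forall>F\<in>set Fs. F \<subseteq> E"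
    using flats by (simp add: is_flat_def)
  then obtain F where F: "F \<in> set Fs" "pre F \<subseteq> A" "A - pre F \<subseteq> S"
    unfolding A_t by (rule superlevel_preimage_decomposition[OF sorted _ c P x_Et t])
  let ?K = "A - pre F"
  have A_eq: "A = pre F \<union> ?K"
    using F(2) by blast
  have K: "?K \<subseteq> Et" "?K \<inter> pre F = {}"
    using F(3) S by auto
  have "?K \<subseteq> S - {j. p j \<in> F}"
    using F(3) A_t by (auto simp: superlevel_def)
  then have "strictly_indep_over F ?K"
    using strict F(1) strictly_indep_over_subset by blast
  then have "is_flat Et lift_rk A"
    using A_eq is_flat_pre_Un[OF _ _ K] flats F(1) by metis
  moreover have "(\<lambda>j. - vec_ind (Et - (pre F \<union> ?K)) j) \<in> sigma_cone Et p S Fs"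
    by (rule sigma_cone_flat_Un_generator[OF fin_S F(1,3) K(1)])
  ultimately show ?thesis
    by (simp only: A_eq[symmetric])
qed

lemma aug_bergman_poly_cone_covered:
  assumes "D \<in> aug_bergman_poly E Et p rk" "x \<in> D"
  shows "\<exists>C \<in> aug_bergman_mat Et lift_rk. x \<in> C \<and> C \<subseteq> D"
proof -
  obtain S Fs where D: "D = sigma_cone Et p S Fs" and comp: "compatible E Et p S Fs"
    and flats: "\<forall>F\<in>set Fs. is_flat E rk F \<and> F \<noteq> E" and indep: "\<forall>T \<subseteq> S. card T \<le> rk (p ` T)"
    and strict: "\<forall>F\<in>set Fs. strictly_indep_over F (S - {j. p j \<in> F})"
    using assms(1) by (rule aug_bergman_polyE)
  have S: "S \<subseteq> Et" "finite S" and sorted: "sorted_wrt (\<subset>) (Fs @ [E])"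
    using comp finite_subset_Et by (auto simp: compatible_def is_chain_def)
  have x: "x \<in> sigma_cone Et p S Fs"
    using assms(2) D by simp
  let ?Pos = "{j \<in> Et. 0 < x j}"
  have Pos_S: "?Pos \<subseteq> S"
    by (rule sigma_cone_positive_subset[OF S(2,1) x])
  note levels = superlevel_set_flat[OF sorted flats strict S(1) x]
  obtain Ls where Ls: "set Ls = superlevel_sets Et x" "sorted_wrt (\<subset>) (Ls @ [Et])"
    using superlevel_sets_sorted_list[OF finite_Et] by blast
  have "mat_indep Et lift_rk ?Pos"
    using lift_indep_iff Pos_S indep by auto
  moreover have "\<forall>A\<in>set Ls. is_flat Et lift_rk A \<and> A \<noteq> Et"
    using Ls(1) levels superlevel_sets_psubset by blast
  ultimately have "sigma_cone Et id ?Pos Ls \<in> aug_bergman_mat Et lift_rk"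
    using sigma_cone_in_aug_bergman_mat[OF Ls(2)] positive_subset_hd_superlevel[OF Ls(1)] by blast
  moreover have "x \<in> sigma_cone Et id ?Pos Ls"
    using mem_sigma_cone_superlevel_sets[OF finite_Et _ Ls(1)] sigma_cone_vanishes[OF S(2,1) x] by blast
  moreover have "sigma_cone Et id ?Pos Ls \<subseteq> D"
    unfolding D
  proof (rule sigma_cone_subsetI)
    show "finite ?Pos"
      using finite_Et by simp
    show "\<forall>j\<in>?Pos. vec_ind {j} \<in> sigma_cone Et p S Fs"
      using Pos_S sigma_cone_unit_generator[OF S(2)] by blast
    show "\<forall>A\<in>set Ls. (\<lambda>j. - vec_ind (Et - {j \<in> Et. id j \<in> A}) j) \<in> sigma_cone Et p S Fs"
    proof
      fix A assume "A \<in> set Ls"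
      moreover have "{j \<in> Et. id j \<in> A} = A"
        using calculation Ls(1) superlevel_sets_psubset[of A Et x] by auto
      ultimately show "(\<lambda>j. - vec_ind (Et - {j \<in> Et. id j \<in> A}) j) \<in> sigma_cone Et p S Fs"
        using Ls(1) levels by simp
    qed
  qed
  ultimately show ?thesis
    by blast
qed


lemma aug_bergman_poly_eq_Union:
  assumes "D \<in> aug_bergman_poly E Et p rk"
  shows "D = \<Union>{C \<in> aug_bergman_mat Et lift_rk. C \<subseteq> D}"
  using aug_bergman_poly_cone_covered[OF assms] by blast

lemma support_aug_bergman_eq:
  "support (aug_bergman_poly E Et p rk) = support (aug_bergman_mat Et lift_rk)"
proof -
  have "\<Union>(aug_bergman_poly E Et p rk) \<subseteq> \<Union>(aug_bergman_mat Et lift_rk)"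
  proof
    fix x assume "x \<in> \<Union>(aug_bergman_poly E Et p rk)"
    then obtain D where "D \<in> aug_bergman_poly E Et p rk" "x \<in> D"
      by blast
    then show "x \<in> \<Union>(aug_bergman_mat Et lift_rk)"
      using aug_bergman_poly_cone_covered by blast
  qed
  moreover have "\<Union>(aug_bergman_mat Et lift_rk) \<subseteq> \<Union>(aug_bergman_poly E Et p rk)"
    using aug_bergman_mat_cone_subset by blast
  ultimately show ?thesis
    by (simp add: support_def)
qed

end

lemma aug_bergman_poly_subset_fan_pi: "aug_bergman_poly E Et p rk \<subseteq> fan_pi E Et p"
  by (auto simp: aug_bergman_poly_def fan_pi_def)

theorem theorem3p8:
  fixes E :: "'a set" and Et :: "'b set" and p :: "'b \<Rightarrow> 'a" and rk :: "'a set \<Rightarrow> nat"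
  assumes "finite E" and "finite Et" and "p ` Et \<subseteq> E"
    and "polymatroid E Et p rk"
  shows "support (aug_bergman_poly E Et p rk) = support (aug_bergman_mat Et (lift_rank E p rk))
    \<and> aug_bergman_poly E Et p rk \<subseteq> fan_pi E Et p
    \<and> (\<forall>C \<in> aug_bergman_mat Et (lift_rank E p rk). \<exists>D \<in> aug_bergman_poly E Et p rk. C \<subseteq> D)
    \<and> (\<forall>D \<in> aug_bergman_poly E Et p rk. \<exists>Cs \<subseteq> aug_bergman_mat Et (lift_rank E p rk). D = \<Union> Cs)"
proof -
  interpret polymatroid_lift E Et p rk
    using assms by unfold_locales
  have "\<exists>Cs \<subseteq> aug_bergman_mat Et lift_rk. D = \<Union>Cs" if "D \<in> aug_bergman_poly E Et p rk" for D
    using aug_bergman_poly_eq_Union[OF that] by (intro exI[of _ "{C \<in> aug_bergman_mat Et lift_rk. C \<subseteq> D}"]) auto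
  then show ?thesis
    using support_aug_bergman_eq aug_bergman_poly_subset_fan_pi aug_bergman_mat_cone_subset
    by (intro conjI ballI) simp_all
qed

end
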